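(* Let $\Sigma_k^o:=\mathbb{E}\{\mathbf{x}^o_k(\mathbf{x}^o_k)'\}$. (i) For any signaling rule $\eta\in\Upsilon$, the matrices $H_k=\mathrm{cov}\{\mathbb{E}\{\mathbf{x}^o_k\mid\mathbf{s}^o_{1:k}\}\}$, $k=1,\ldots,\kappa$, satisfy $\Sigma_1^o\succeq H_1\succeq O$ and $\Sigma_k^o\succeq H_k\succeq AH_{k-1}A'$ for $k>1$. (ii) Conversely, for any positive semidefinite matrices $S_1,\ldots,S_\kappa\in\mathbb{S}^m_+$ satisfying $\Sigma_1^o\succeq S_1\succeq O$ and $\Sigma_k^o\succeq S_k\succeq AS_{k-1}A'$ for $k>1$, there exists a memoryless linear-plus-noise signaling rule $\eta\in\Upsilon$ (i.e., one with $\mathbf{s}_k=L_{k,k}'\mathbf{x}_k+\boldsymbol{\vartheta}_k$ for some $L_{k,k}\in\mathbb{R}^{m\times m}$) such that $H_k=S_k$ for all $k=1,\ldots,\kappa$.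
   Context: Fix $A\in\mathbb{R}^{m\times m}$, $\Sigma_1,\Sigma_w\in\mathbb{S}^m_+$ (positive semidefinite symmetric matrices). The control-free state is the Gauss–Markov process $\mathbf{x}^o_{k+1}=A\mathbf{x}^o_k+\mathbf{w}_k$, $k=1,\ldots,\kappa$, with $\mathbf{x}^o_1\sim\mathcal{N}(0,\Sigma_1)$ and $\mathbf{w}_k\sim\mathcal{N}(0,\Sigma_w)$ i.i.d., independent of $\mathbf{x}^o_1$. A signaling rule $\eta\in\Upsilon$ is specified by deterministic matrices $L_k\in\mathbb{R}^{mk\times m}$ and covariances $\Theta_k\in\mathbb{S}^m_+$; it produces signals $\mathbf{s}_k=L_k'\mathbf{x}_{1:k}+\boldsymbol{\vartheta}_k\in\mathbb{R}^m$ from the (possibly controlled) states $\mathbf{x}_{1:k}=[\mathbf{x}_k'\cdots\mathbf{x}_1']'$, with $\boldsymbol{\vartheta}_k\sim\mathcal{N}(0,\Theta_k)$ independent of all other random variables. The associated control-free signals are $\mathbf{s}^o_k:=L_k'\mathbf{x}^o_{1:k}+\boldsymbol{\vartheta}_k$. (In the controlled system $\mathbf{x}_{k+1}=A\mathbf{x}_k+B\mathbf{u}_k+\mathbf{w}_k$, $\mathbf{x}_1=\mathbf{x}^o_1$, with $\mathbf{u}_k$ a measurable function of $\mathbf{s}_{1:k}$, one has $\mathbb{E}\{\mathbf{x}^o_k\mid\mathbf{s}_{1:k}\}=\mathbb{E}\{\mathbf{x}^o_k\mid\mathbf{s}^o_{1:k}\}$, so $H_k$ is the covariance of the posterior estimate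 of the control-free state given the signals.) For symmetric matrices, $X\succeq Y$ means $X-Y$ is positive semidefinite. *)

theory Defs
  imports "Jordan_Normal_Form.Matrix"
begin

definition psd :: "nat \<Rightarrow> real mat \<Rightarrow> bool" where
  "psd m M \<longleftrightarrow> M \<in> carrier_mat m m \<and> transpose_mat M = M \<and>
     (\<forall>v \<in> carrier_vec m. 0 \<le> v \<bullet> (M *\<^sub>v v))"

definition loewner_ge :: "nat \<Rightarrow> real mat \<Rightarrow> real mat \<Rightarrow> bool" where
  "loewner_ge m X Y \<longleftrightarrow> X \<in> carrier_mat m m \<and> Y \<in> carrier_mat m m \<and> psd m (X - Y)"

(* scov A S1 Sw n = E{x^o_{n+1} (x^o_{n+1})'} *)
primrec scov :: "real mat \<Rightarrow> real mat \<Rightarrow> real mat \<Rightarrow> nat \<Rightarrow> real mat" where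
  "scov A S1 Sw 0 = S1"
| "scov A S1 Sw (Suc n) = A * scov A S1 Sw n * transpose_mat A + Sw"

definition Sigma_o :: "real mat \<Rightarrow> real mat \<Rightarrow> real mat \<Rightarrow> nat \<Rightarrow> real mat" where
  "Sigma_o A S1 Sw k = scov A S1 Sw (k - 1)"

(* E{x^o_a (x^o_b)'} for times a, b \<ge> 1 *)
definition xcov :: "real mat \<Rightarrow> real mat \<Rightarrow> real mat \<Rightarrow> nat \<Rightarrow> nat \<Rightarrow> real mat" where
  "xcov A S1 Sw a b =
     (if b \<le> a then (A ^\<^sub>m (a - b)) * Sigma_o A S1 Sw b
      else Sigma_o A S1 Sw a * (transpose_mat A ^\<^sub>m (b - a)))"

definition blockmat :: "nat \<Rightarrow> nat \<Rightarrow> nat \<Rightarrow> (nat \<Rightarrow> nat \<Rightarrow> real mat) \<Rightarrow> real mat" where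
  "blockmat m p q B = mat (m * p) (m * q) (\<lambda>(r, c). B (r div m) (c div m) $$ (r mod m, c mod m))"

(* E{x^o_{1:i} (x^o_{1:j})'}, with x_{1:i} = [x_i' ... x_1']' *)
definition stackcov :: "nat \<Rightarrow> real mat \<Rightarrow> real mat \<Rightarrow> real mat \<Rightarrow> nat \<Rightarrow> nat \<Rightarrow> real mat" where
  "stackcov m A S1 Sw i j = blockmat m i j (\<lambda>p q. xcov A S1 Sw (i - p) (j - q))"

(* E{x^o_a (x^o_{1:j})'} *)
definition rowcov :: "nat \<Rightarrow> real mat \<Rightarrow> real mat \<Rightarrow> real mat \<Rightarrow> nat \<Rightarrow> nat \<Rightarrow> real mat" where
  "rowcov m A S1 Sw a j = blockmat m 1 j (\<lambda>p q. xcov A S1 Sw a (j - q))"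

(* E{s^o_{1:k} (s^o_{1:k})'}, with s_{1:k} = [s_k' ... s_1']',
   s^o_j = L_j' x^o_{1:j} + theta_j *)
definition sig_cov :: "nat \<Rightarrow> real mat \<Rightarrow> real mat \<Rightarrow> real mat \<Rightarrow>
    (nat \<Rightarrow> real mat) \<Rightarrow> (nat \<Rightarrow> real mat) \<Rightarrow> nat \<Rightarrow> real mat" where
  "sig_cov m A S1 Sw L Th k = blockmat m k k (\<lambda>p q.
      let a = k - p; b = k - q in
      transpose_mat (L a) * stackcov m A S1 Sw a b * L b + (if a = b then Th a else 0\<^sub>m m m))"

(* E{x^o_k (s^o_{1:k})'} *)
definition cross_cov :: "nat \<Rightarrow> real mat \<Rightarrow> real mat \<Rightarrow> real mat \<Rightarrow>
    (nat \<Rightarrow> real mat) \<Rightarrow> nat \<Rightarrow> real mat" where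
  "cross_cov m A S1 Sw L k = blockmat m 1 k (\<lambda>p q.
      let b = k - q in rowcov m A S1 Sw k b * L b)"

(* Covariance of E{x | s} for zero-mean jointly Gaussian x (dim m), s (dim n):
   E{x|s} = K s where K solves the normal equations K Css = Cxs,
   so cov(E{x|s}) = K Css K'. *)
definition cond_mean_cov :: "nat \<Rightarrow> nat \<Rightarrow> real mat \<Rightarrow> real mat \<Rightarrow> real mat" where
  "cond_mean_cov m n Cxs Css =
     (let K = (SOME K. K \<in> carrier_mat m n \<and> K * Css = Cxs) in K * Css * transpose_mat K)"

(* H_k = cov{E{x^o_k | s^o_{1:k}}} for the signaling rule (L, Th) *)
definition Hcov :: "nat \<Rightarrow> real mat \<Rightarrow> real mat \<Rightarrow> real mat \<Rightarrow>
    (nat \<Rightarrow> real mat) \<Rightarrow> (nat \<Rightarrow> real mat) \<Rightarrow> nat \<Rightarrow> real mat" where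
  "Hcov m A S1 Sw L Th k =
     cond_mean_cov m (m * k) (cross_cov m A S1 Sw L k) (sig_cov m A S1 Sw L Th k)"

definition signaling_rule :: "nat \<Rightarrow> nat \<Rightarrow> (nat \<Rightarrow> real mat) \<Rightarrow> (nat \<Rightarrow> real mat) \<Rightarrow> bool" where
  "signaling_rule m \<kappa> L Th \<longleftrightarrow>
     (\<forall>k\<in>{1..\<kappa>}. L k \<in> carrier_mat (m * k) m \<and> psd m (Th k))"

(* memoryless rule: L_k = [L_{k,k}' 0 ... 0]', acting only on x_k *)
definition memoryless_L :: "nat \<Rightarrow> (nat \<Rightarrow> real mat) \<Rightarrow> nat \<Rightarrow> real mat" where
  "memoryless_L m Lkk k = mat (m * k) m (\<lambda>(r, c). if r < m then Lkk k $$ (r, c) else 0)"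

end

(*
  Every random variable of the model is a linear combination of the independent Gaussian
  sources x_1, w_1, ..., w_(kappa-1), theta_1, ..., theta_kappa.  Representing it by its
  coefficient vector, covariance becomes a positive semidefinite bilinear form, covariance
  matrices become Gram matrices, and E{x | s} becomes the orthogonal projection of x onto the
  span of the components of s; so H_k is the Gram matrix of the projection xh_k of x_k.

  (i) Projection can only decrease Gram matrices, whence Sigma_k >= H_k >= 0.  Moreover
  A xh_(k-1) lies in the span of s_(1:k), while x_k - A xh_(k-1) = A (x_(k-1) - xh_(k-1)) + w_(k-1)
  is orthogonal to s_(1:k-1) and hence to A xh_(k-1); this gives H_k >= A H_(k-1) A'.

  (ii) With P = Sigma_k - A S_(k-1) A' and D = S_k - A S_(k-1) A' we have 0 <= D <= P, so there
  is L with P L = D and L' P L <= D; take Theta_k = D - L' P L and s_k = L' x_k + theta_k.  The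
  Kalman recursion xh_k = A xh_(k-1) + (s_k - L' A xh_(k-1)) is then the projection onto
  s_(1:k), its innovation has covariance L' P L + Theta_k = D, and H_k = A S_(k-1) A' + D = S_k.
*)

theory Submission
  imports Defs "HOL-Library.Function_Algebras"
begin

section \<open>Semi-inner products and Gram matrices\<close>

instantiation "fun" :: (type, real_vector) real_vector
begin
definition scaleR_fun :: "real \<Rightarrow> ('a \<Rightarrow> 'b) \<Rightarrow> 'a \<Rightarrow> 'b" where
  "scaleR_fun r f = (\<lambda>x. r *\<^sub>R f x)"
instance by standard (auto simp: scaleR_fun_def fun_eq_iff algebra_simps)
end

lemma scaleR_fun_apply [simp]: "(r *\<^sub>R f) x = r *\<^sub>R f x"
  by (simp add: scaleR_fun_def)

definition lincomb :: "real mat \<Rightarrow> (nat \<Rightarrow> 'v::real_vector) \<Rightarrow> nat \<Rightarrow> 'v" where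
  "lincomb M x i = (if i < dim_row M then \<Sum>j<dim_col M. M $$ (i, j) *\<^sub>R x j else 0)"

definition gram :: "('v \<Rightarrow> 'v \<Rightarrow> real) \<Rightarrow> nat \<Rightarrow> nat \<Rightarrow> (nat \<Rightarrow> 'v) \<Rightarrow> (nat \<Rightarrow> 'v) \<Rightarrow> real mat" where
  "gram B m n x y = mat m n (\<lambda>(i, j). B (x i) (y j))"

lemma gram_carrier [simp]: "gram B m n x y \<in> carrier_mat m n"
  and dim_row_gram [simp]: "dim_row (gram B m n x y) = m"
  and dim_col_gram [simp]: "dim_col (gram B m n x y) = n"
  by (simp_all add: gram_def)

lemma index_gram [simp]: "i < m \<Longrightarrow> j < n \<Longrightarrow> gram B m n x y $$ (i, j) = B (x i) (y j)"
  by (simp add: gram_def)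

lemma gram_cong:
  "(\<And>i. i < m \<Longrightarrow> x i = x' i) \<Longrightarrow> (\<And>j. j < n \<Longrightarrow> y j = y' j) \<Longrightarrow>
   gram B m n x y = gram B m n x' y'"
  by (auto simp: gram_def intro!: cong_mat)

lemma lincomb_add: "lincomb M (x + y) = lincomb M x + lincomb M y"
  by (auto simp: lincomb_def fun_eq_iff scaleR_add_right sum.distrib)

lemma lincomb_diff: "lincomb M (x - y) = lincomb M x - lincomb M y"
  by (auto simp: lincomb_def fun_eq_iff scaleR_diff_right sum_subtractf)

lemma lincomb_in_subspace:
  "subspace S \<Longrightarrow> (\<And>j. j < dim_col M \<Longrightarrow> x j \<in> S) \<Longrightarrow> lincomb M x i \<in> S"
  unfolding lincomb_def by (auto intro!: subspace_sum subspace_scale subspace_0)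

lemma span_range_lincomb:
  assumes "\<And>i. i < m \<Longrightarrow> z i \<in> span (y ` {..<n})"
  obtains K where "K \<in> carrier_mat m n" and "\<And>i. i < m \<Longrightarrow> z i = lincomb K y i"
proof -
  have "\<exists>c. v = (\<Sum>l<n. c l *\<^sub>R y l)" if "v \<in> span (y ` {..<n})" for v
    using that
  proof (induction rule: span_induct_alt)
    case base
    show ?case by (rule exI[of _ "\<lambda>_. 0"]) simp
  next
    case (step a v w)
    then obtain l c where l: "l < n" "v = y l" and c: "w = (\<Sum>l<n. c l *\<^sub>R y l)" by blast
    have "(\<Sum>j<n. (if j = l then a else 0) *\<^sub>R y j) = (\<Sum>j<n. if j = l then a *\<^sub>R y j else 0)"
      by (rule sum.cong) auto
    then have "a *\<^sub>R y l = (\<Sum>j<n. (if j = l then a else 0) *\<^sub>R y j)"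
      using l by simp
    then show ?case
      using l c by (intro exI[of _ "\<lambda>j. (if j = l then a else 0) + c j"])
        (simp add: scaleR_add_left sum.distrib)
  qed
  then have "\<forall>i. \<exists>c. i < m \<longrightarrow> z i = (\<Sum>l<n. c l *\<^sub>R y l)"
    using assms by blast
  then obtain c where "\<And>i. i < m \<Longrightarrow> z i = (\<Sum>l<n. c i l *\<^sub>R y l)"
    by metis
  then show ?thesis
    by (intro that[of "mat m n (\<lambda>(i, l). c i l)"]) (auto simp: lincomb_def)
qed

locale semi_inner_product =
  fixes B :: "'v::real_vector \<Rightarrow> 'v \<Rightarrow> real"
  assumes add_left: "B (x + y) z = B x z + B y z"
    and scale_left: "B (r *\<^sub>R x) z = r * B x z"
    and sym: "B x y = B y x"
    and nonneg: "0 \<le> B x x"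
begin

lemma add_right: "B z (x + y) = B z x + B z y"
  using add_left sym by metis

lemma scale_right: "B z (r *\<^sub>R x) = r * B z x"
  using scale_left sym by metis

lemma zero_left [simp]: "B 0 z = 0"
  using scale_left[of 0] by simp

lemma zero_right [simp]: "B z 0 = 0"
  using scale_right[of _ 0] by simp

lemma diff_left: "B (x - y) z = B x z - B y z"
  using add_left[of "x - y" y] by simp

lemma diff_right: "B z (x - y) = B z x - B z y"
  using add_right[of z "x - y" y] by simp

lemma sum_left: "B (\<Sum>i\<in>S. f i) z = (\<Sum>i\<in>S. B (f i) z)"
  by (induction S rule: infinite_finite_induct) (auto simp: add_left)

lemma sum_right: "B z (\<Sum>i\<in>S. f i) = (\<Sum>i\<in>S. B z (f i))"
  by (induction S rule: infinite_finite_induct) (auto simp: add_right)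

lemmas bilinear = add_left add_right scale_left scale_right diff_left diff_right sum_left sum_right

lemma null_imp_orthogonal:
  assumes "B x x = 0"
  shows "B x y = 0"
proof (rule ccontr)
  assume ne: "B x y \<noteq> 0"
  define b c where "b = B x y" and "c = B y y"
  have c: "c \<ge> 0" using nonneg c_def by simp
  define t where "t = - b / (c + 1)"
  have "0 \<le> B (x + t *\<^sub>R y) (x + t *\<^sub>R y)" by (rule nonneg)
  also have "\<dots> = 2 * t * b + t * t * c"
    using assms by (simp add: bilinear b_def c_def sym[of y x] algebra_simps)
  also have "\<dots> = b * b * (- c - 2) / ((c + 1) * (c + 1))"
    using c unfolding t_def by (simp add: divide_simps) (simp add: algebra_simps)
  also have "\<dots> < 0"
  proof -
    have "b * b > 0" using ne b_def by (metis not_real_square_gt_zero)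
    then show ?thesis using c by (intro divide_neg_pos mult_pos_neg) simp_all
  qed
  finally show False by simp
qed

lemma subspace_orthogonal: "subspace {v. B z v = 0}"
  by (auto simp: subspace_def add_right scale_right)

lemma orthogonal_span: "(\<And>v. v \<in> U \<Longrightarrow> B z v = 0) \<Longrightarrow> w \<in> span U \<Longrightarrow> B z w = 0"
  using span_minimal[OF _ subspace_orthogonal, of U z] by blast

lemma orthogonal_lincomb_left:
  "(\<And>l. l < dim_col M \<Longrightarrow> B (x l) w = 0) \<Longrightarrow> B (lincomb M x i) w = 0"
  by (simp add: lincomb_def bilinear)

text \<open>Gram--Schmidt: correct the projection onto \<open>U\<close> along the part of the new vector orthogonal
  to \<open>U\<close>; if that part is null it is orthogonal to everything and needs no correction.\<close>

lemma orthogonal_projection_exists: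
  assumes "finite U"
  shows "\<exists>p \<in> span U. \<forall>v\<in>U. B (x - p) v = 0"
  using assms
proof (induction arbitrary: x rule: finite_induct)
  case empty
  show ?case by (intro bexI[of _ 0] span_zero) simp
next
  case (insert y U)
  have span_U: "span U \<subseteq> span (insert y U)"
    by (rule span_mono) blast
  obtain p where p: "p \<in> span U" and p_orth: "\<And>v. v \<in> U \<Longrightarrow> B (x - p) v = 0"
    using insert.IH by blast
  obtain q where q: "q \<in> span U" and q_orth: "\<And>v. v \<in> U \<Longrightarrow> B (y - q) v = 0"
    using insert.IH by blast
  define e r where "e = x - p" and "r = y - q"
  define t where "t = B e r / B r r"
  have e_orth: "B e w = 0" and r_orth: "B r w = 0" if "w \<in> span U" for w
    using orthogonal_span[OF p_orth that] orthogonal_span[OF q_orth that] by (simp_all add: e_def r_def)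
  have t: "B e r = t * B r r"
  proof (cases "B r r = 0")
    case True
    then show ?thesis using null_imp_orthogonal sym by (metis mult_zero_right)
  qed (simp add: t_def)
  have "B (e - t *\<^sub>R r) v = 0" if "v \<in> insert y U" for v
  proof (cases "v = y")
    case True
    have "y = r + q" by (simp add: r_def)
    then show ?thesis
      using True t e_orth[OF q] r_orth[OF q] by (simp add: bilinear)
  next
    case False
    then show ?thesis
      using that e_orth r_orth span_base[of v U] by (simp add: bilinear)
  qed
  moreover have "p + t *\<^sub>R r \<in> span (insert y U)"
    using p q span_U unfolding r_def by (intro span_add span_scale span_diff) (auto intro: span_base)
  ultimately show ?case
    by (intro bexI[of _ "p + t *\<^sub>R r"]) (simp_all add: e_def algebra_simps)
qed

lemma gram_transpose: "transpose_mat (gram B m n x y) = gram B n m y x"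
  by (rule eq_matI) (auto simp: sym)

lemma gram_lincomb_left:
  assumes "M \<in> carrier_mat p k"
  shows "gram B p n (lincomb M x) y = M * gram B k n x y"
  using assms by (intro eq_matI) (auto simp: lincomb_def bilinear scalar_prod_def lessThan_atLeast0)

lemma gram_lincomb_right:
  assumes N: "N \<in> carrier_mat q k"
  shows "gram B m q x (lincomb N y) = gram B m k x y * transpose_mat N"
proof -
  have "gram B m q x (lincomb N y) = transpose_mat (N * gram B k m y x)"
    using gram_lincomb_left[OF N] gram_transpose by metis
  also have "\<dots> = gram B m k x y * transpose_mat N"
    using N by (simp add: transpose_mult[of N q k _ m] gram_transpose)
  finally show ?thesis .
qed

lemma gram_add_left: "gram B m n (x + x') y = gram B m n x y + gram B m n x' y"
  and gram_add_right: "gram B m n x (y + y') = gram B m n x y + gram B m n x y'"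
  by (auto intro!: eq_matI simp: bilinear)

lemma gram_eq_zero: "(\<And>i j. i < m \<Longrightarrow> j < n \<Longrightarrow> B (x i) (y j) = 0) \<Longrightarrow> gram B m n x y = 0\<^sub>m m n"
  by (rule eq_matI) auto

lemma psd_gram: "psd m (gram B m m x x)"
  unfolding psd_def
proof (intro conjI ballI)
  fix v :: "real vec"
  assume v: "v \<in> carrier_vec m"
  have "v \<bullet> (gram B m m x x *\<^sub>v v) = (\<Sum>i<m. v $ i * (\<Sum>j<m. B (x i) (x j) * v $ j))"
    using v by (simp add: scalar_prod_def lessThan_atLeast0)
  also have "\<dots> = B (\<Sum>i<m. v $ i *\<^sub>R x i) (\<Sum>j<m. v $ j *\<^sub>R x j)"
    by (simp add: bilinear sum_distrib_left algebra_simps) (subst sum.swap, simp add: algebra_simps)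
  finally show "0 \<le> v \<bullet> (gram B m m x x *\<^sub>v v)"
    using nonneg by simp
qed (simp_all add: gram_transpose)

lemma gram_pythagoras:
  assumes "\<And>i j. i < m \<Longrightarrow> j < m \<Longrightarrow> B (x i - z i) (z j) = 0"
  shows "gram B m m x x = gram B m m z z + gram B m m (x - z) (x - z)"
proof (rule eq_matI)
  fix i j
  assume "i < dim_row (gram B m m z z + gram B m m (x - z) (x - z))"
    and "j < dim_col (gram B m m z z + gram B m m (x - z) (x - z))"
  then have ij: "i < m" "j < m" by auto
  have "x i = z i + (x i - z i)" "x j = z j + (x j - z j)" by simp_all
  then have "B (x i) (x j) = B (z i) (z j) + B (x i - z i) (z j) + B (x j - z j) (z i)
      + B (x i - z i) (x j - z j)"
    by (metis add_left add_right sym add.assoc)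
  then show "gram B m m x x $$ (i, j) = (gram B m m z z + gram B m m (x - z) (x - z)) $$ (i, j)"
    using assms ij by simp
qed auto

lemma loewner_ge_gram:
  assumes "\<And>i j. i < m \<Longrightarrow> j < m \<Longrightarrow> B (x i - z i) (z j) = 0"
  shows "loewner_ge m (gram B m m x x) (gram B m m z z)"
proof -
  have "gram B m m x x - gram B m m z z = gram B m m (x - z) (x - z)"
    by (subst gram_pythagoras[OF assms]) (auto intro!: eq_matI)
  then show ?thesis
    unfolding loewner_ge_def using psd_gram by simp
qed

definition orth_proj :: "nat \<Rightarrow> 'v set \<Rightarrow> (nat \<Rightarrow> 'v) \<Rightarrow> (nat \<Rightarrow> 'v) \<Rightarrow> bool" where
  "orth_proj m U x p \<longleftrightarrow> (\<forall>i<m. p i \<in> span U \<and> (\<forall>v\<in>U. B (x i - p i) v = 0))"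

lemma orth_proj_exists:
  assumes "finite U"
  obtains p where "orth_proj m U x p"
proof -
  have "\<exists>p\<in>span U. \<forall>v\<in>U. B (x i - p) v = 0" for i
    using orthogonal_projection_exists[OF assms] .
  then obtain p where "\<And>i. p i \<in> span U \<and> (\<forall>v\<in>U. B (x i - p i) v = 0)"
    by metis
  then show ?thesis
    using that unfolding orth_proj_def by blast
qed

lemma orth_proj_orthogonal: "orth_proj m U x p \<Longrightarrow> i < m \<Longrightarrow> w \<in> span U \<Longrightarrow> B (x i - p i) w = 0"
  unfolding orth_proj_def by (blast intro: orthogonal_span)

lemma loewner_ge_orth_proj: "orth_proj m U x p \<Longrightarrow> loewner_ge m (gram B m m x x) (gram B m m p p)"
  by (intro loewner_ge_gram orth_proj_orthogonal) (auto simp: orth_proj_def)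

lemma orth_proj_coefficients:
  assumes p: "orth_proj m (y ` {..<n}) x p"
  obtains K where "K \<in> carrier_mat m n" and "\<And>i. i < m \<Longrightarrow> p i = lincomb K y i"
    and "gram B m n x y = K * gram B n n y y"
proof -
  obtain K where K: "K \<in> carrier_mat m n" and p_K: "\<And>i. i < m \<Longrightarrow> p i = lincomb K y i"
    using span_range_lincomb p unfolding orth_proj_def by metis
  have "gram B m n x y = gram B m n (lincomb K y) y"
    using p p_K by (intro eq_matI) (auto simp: orth_proj_def diff_left)
  then show ?thesis
    using that K p_K gram_lincomb_left[OF K] by simp
qed

text \<open>One Kalman update in Hilbert-space form: \<open>z\<close> is the projection of \<open>z + u\<close> onto \<open>U\<close>, and the new
  observations \<open>\<nu> + M z\<close> carry the innovation \<open>\<nu>\<close>, orthogonal to \<open>U\<close> and with the same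
  covariance with \<open>u\<close> as with itself.\<close>

lemma innovation_update:
  assumes z: "\<And>i. i < m \<Longrightarrow> z i \<in> span U"
    and u: "\<And>i v. i < m \<Longrightarrow> v \<in> U \<Longrightarrow> B (u i) v = 0"
    and \<nu>: "\<And>i v. i < m \<Longrightarrow> v \<in> U \<Longrightarrow> B (\<nu> i) v = 0"
    and u_\<nu>: "\<And>i j. i < m \<Longrightarrow> j < m \<Longrightarrow> B (u i) (\<nu> j) = B (\<nu> i) (\<nu> j)"
    and M: "dim_col M = m"
  shows "orth_proj m (U \<union> (\<nu> + lincomb M z) ` {..<m}) (z + u) (z + \<nu>)"
    and "gram B m m (z + \<nu>) (z + \<nu>) = gram B m m z z + gram B m m \<nu> \<nu>"
proof -
  let ?U' = "U \<union> (\<nu> + lincomb M z) ` {..<m}"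
  have Mz: "lincomb M z i \<in> span U" for i
    using z M by (intro lincomb_in_subspace) auto
  have \<nu>_span: "B (\<nu> i) w = 0" if "i < m" "w \<in> span U" for i w
    using \<nu> that by (blast intro: orthogonal_span)
  have u_span: "B (u i) w = 0" if "i < m" "w \<in> span U" for i w
    using u that by (blast intro: orthogonal_span)
  have e_span: "B (u i - \<nu> i) w = 0" if "i < m" "w \<in> span U" for i w
    using u_span[OF that] \<nu>_span[OF that] by (simp add: diff_left)
  have "(z + \<nu>) i \<in> span ?U'" if "i < m" for i
  proof -
    have "span U \<subseteq> span ?U'"
      by (rule span_mono) blast
    then have "z i \<in> span ?U'" "lincomb M z i \<in> span ?U'"
      using z[OF that] Mz by auto
    moreover have "(\<nu> + lincomb M z) i \<in> span ?U'"
      using that by (intro span_base) auto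
    ultimately have "z i + ((\<nu> + lincomb M z) i - lincomb M z i) \<in> span ?U'"
      by (intro span_add span_diff)
    then show ?thesis
      by simp
  qed
  moreover have "B ((z + u) i - (z + \<nu>) i) v = 0" if i: "i < m" and v: "v \<in> ?U'" for i v
  proof (cases "v \<in> U")
    case True
    then show ?thesis
      using e_span[OF i span_base] by simp
  next
    case False
    then obtain l where "l < m" and "v = \<nu> l + lincomb M z l"
      using v by auto
    then show ?thesis
      using u_\<nu>[OF i] e_span[OF i Mz] by (simp add: bilinear)
  qed
  ultimately show "orth_proj m ?U' (z + u) (z + \<nu>)"
    unfolding orth_proj_def by blast
  have "gram B m m z \<nu> = 0\<^sub>m m m" "gram B m m \<nu> z = 0\<^sub>m m m"
    using \<nu>_span z by (auto intro!: gram_eq_zero simp: sym[of "z _"])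
  then show "gram B m m (z + \<nu>) (z + \<nu>) = gram B m m z z + gram B m m \<nu> \<nu>"
    by (simp add: gram_add_left gram_add_right)
qed

text \<open>\<^const>\<open>cond_mean_cov\<close> picks an arbitrary solution \<open>K\<close> of the normal equations, but every
  solution gives the same \<open>K G K'\<close>.\<close>

lemma cond_mean_cov_gram:
  assumes "orth_proj m (y ` {..<n}) x p"
  shows "cond_mean_cov m n (gram B m n x y) (gram B n n y y) = gram B m m p p"
proof -
  define G where "G = gram B n n y y"
  obtain K where K: "K \<in> carrier_mat m n" and p_K: "\<And>i. i < m \<Longrightarrow> p i = lincomb K y i"
    and KG: "gram B m n x y = K * G"
    using orth_proj_coefficients[OF assms] unfolding G_def by metis
  have G: "G \<in> carrier_mat n n" and G_sym: "transpose_mat G = G"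
    by (simp_all add: G_def gram_transpose)
  define K' where "K' = (SOME K'. K' \<in> carrier_mat m n \<and> K' * G = K * G)"
  have "K' \<in> carrier_mat m n \<and> K' * G = K * G"
    unfolding K'_def by (rule someI[of _ K]) (use K in simp)
  then have K': "K' \<in> carrier_mat m n" and K'G: "K' * G = K * G" by auto
  have GK': "G * transpose_mat K' = G * transpose_mat K"
  proof -
    have "G * transpose_mat K' = transpose_mat (K' * G)"
      using K' G G_sym by (simp add: transpose_mult[of K' m n G n])
    also have "\<dots> = G * transpose_mat K"
      using K G G_sym by (simp add: K'G transpose_mult[of K m n G n])
    finally show ?thesis .
  qed
  have "cond_mean_cov m n (gram B m n x y) G = K' * G * transpose_mat K'"
    by (simp add: cond_mean_cov_def KG K'_def Let_def)
  also have "\<dots> = K * (G * transpose_mat K)"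
    using K K' G by (simp add: K'G GK'[symmetric] assoc_mult_mat[of _ m n G n])
  also have "\<dots> = gram B m m (lincomb K y) (lincomb K y)"
    using K G by (simp add: gram_lincomb_left gram_lincomb_right G_def assoc_mult_mat[of K m n _ n])
  also have "\<dots> = gram B m m p p"
    using p_K by (intro gram_cong) simp_all
  finally show ?thesis by (simp add: G_def)
qed

end

section \<open>Positive semidefinite quadratic forms\<close>

lemma semi_inner_product_sum:
  assumes "\<And>t. t \<in> T \<Longrightarrow> semi_inner_product (B t)"
  shows "semi_inner_product (\<lambda>x y. \<Sum>t\<in>T. B t x y)"
proof
  fix x y z and r :: real
  show "(\<Sum>t\<in>T. B t (x + y) z) = (\<Sum>t\<in>T. B t x z) + (\<Sum>t\<in>T. B t y z)"
    unfolding sum.distrib[symmetric] using assms by (intro sum.cong) (simp_all add: semi_inner_product.add_left)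
  show "(\<Sum>t\<in>T. B t (r *\<^sub>R x) z) = r * (\<Sum>t\<in>T. B t x z)"
    unfolding sum_distrib_left using assms by (intro sum.cong) (simp_all add: semi_inner_product.scale_left)
  show "(\<Sum>t\<in>T. B t x y) = (\<Sum>t\<in>T. B t y x)"
    using assms semi_inner_product.sym by (metis (mono_tags, lifting) sum.cong)
  show "0 \<le> (\<Sum>t\<in>T. B t x x)"
    using assms semi_inner_product.nonneg by (metis sum_nonneg)
qed

lemma semi_inner_product_add:
  assumes "semi_inner_product B" and "semi_inner_product B'"
  shows "semi_inner_product (\<lambda>x y. B x y + B' x y)"
proof
  interpret B: semi_inner_product B by fact
  interpret B': semi_inner_product B' by fact
  fix x y z and r :: real
  show "B (x + y) z + B' (x + y) z = B x z + B' x z + (B y z + B' y z)"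
    by (simp add: B.add_left B'.add_left)
  show "B (r *\<^sub>R x) z + B' (r *\<^sub>R x) z = r * (B x z + B' x z)"
    by (simp add: B.scale_left B'.scale_left algebra_simps)
  show "B x y + B' x y = B y x + B' y x"
    using B.sym B'.sym by simp
  show "0 \<le> B x x + B' x x"
    using B.nonneg B'.nonneg by (simp add: add_nonneg_nonneg)
qed

lemma semi_inner_product_linear_pullback:
  assumes "semi_inner_product B" and "linear f"
  shows "semi_inner_product (\<lambda>x y. B (f x) (f y))"
proof
  interpret semi_inner_product B by fact
  fix x y z and r :: real
  show "B (f (x + y)) (f z) = B (f x) (f z) + B (f y) (f z)"
    using assms(2) by (simp add: linear_add add_left)
  show "B (f (r *\<^sub>R x)) (f z) = r * B (f x) (f z)"
    using assms(2) by (simp add: linear_scale scale_left)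
  show "B (f x) (f y) = B (f y) (f x)" by (rule sym)
  show "0 \<le> B (f x) (f x)" by (rule nonneg)
qed

definition qform :: "nat \<Rightarrow> real mat \<Rightarrow> (nat \<Rightarrow> real) \<Rightarrow> (nat \<Rightarrow> real) \<Rightarrow> real" where
  "qform n M u v = (\<Sum>i<n. \<Sum>j<n. u i * M $$ (i, j) * v j)"

lemma psd_carrier: "psd n M \<Longrightarrow> M \<in> carrier_mat n n"
  by (simp add: psd_def)

lemma psd_symmetric: "psd n M \<Longrightarrow> i < n \<Longrightarrow> j < n \<Longrightarrow> M $$ (j, i) = M $$ (i, j)"
  unfolding psd_def by (metis carrier_matD index_transpose_mat(1))

lemma semi_inner_product_qform:
  assumes "psd n M"
  shows "semi_inner_product (qform n M)"
proof
  fix u v w :: "nat \<Rightarrow> real" and r :: real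
  show "qform n M (u + v) w = qform n M u w + qform n M v w"
    by (simp add: qform_def algebra_simps sum.distrib)
  show "qform n M (r *\<^sub>R u) w = r * qform n M u w"
    by (simp add: qform_def sum_distrib_left algebra_simps)
  show "qform n M u v = qform n M v u"
    unfolding qform_def by (subst sum.swap) (auto intro!: sum.cong simp: psd_symmetric[OF assms])
  have "qform n M u u = vec n u \<bullet> (M *\<^sub>v vec n u)"
    using psd_carrier[OF assms]
    by (auto simp: qform_def scalar_prod_def lessThan_atLeast0 sum_distrib_left algebra_simps
        intro!: sum.cong)
  then show "0 \<le> qform n M u u"
    using assms unfolding psd_def by simp
qed

lemma qform_zero [simp]: "qform n M 0 v = 0" "qform n M u 0 = 0"
  by (simp_all add: qform_def)

definition coord :: "'a \<Rightarrow> nat \<Rightarrow> 'a \<Rightarrow> nat \<Rightarrow> real" where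
  "coord a i = (\<lambda>b j. if b = a \<and> j = i then 1 else 0)"

lemma coord_apply: "coord a i b = (if b = a then (\<lambda>j. if j = i then 1 else 0) else 0)"
  by (auto simp: coord_def)

lemma qform_unit:
  assumes "i < n" "j < n"
  shows "qform n M (\<lambda>k. if k = i then 1 else 0) (\<lambda>k. if k = j then 1 else 0) = M $$ (i, j)"
proof -
  have "(\<Sum>b<n. (if a = i then 1 else 0) * M $$ (a, b) * (if b = j then 1 else 0)) =
      (if a = i then M $$ (i, j) else 0)" for a
  proof -
    have "(\<Sum>b<n. (if a = i then 1 else 0) * M $$ (a, b) * (if b = j then 1 else 0)) =
        (\<Sum>b<n. if b = j then (if a = i then M $$ (i, j) else 0) else 0)"
      by (rule sum.cong) auto
    then show ?thesis using assms by simp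
  qed
  then show ?thesis
    using assms by (simp add: qform_def)
qed

lemma linear_apply: "linear (\<lambda>f. f a)"
  by (rule linearI) simp_all

text \<open>\<open>P L = D\<close> and \<open>L' P L \<le> D\<close> say that \<open>L' y\<close> is the projection of \<open>x\<close> onto \<open>y\<close> for a pair with
  \<open>cov y = P\<close> and \<open>cov (x, y) = cov x = D\<close>; the form below realizes such a pair.\<close>

lemma gain_for_loewner_interval:
  assumes D: "psd m D" and PD: "psd m (P - D)" and P: "P \<in> carrier_mat m m"
  shows "\<exists>L \<in> carrier_mat m m. P * L = D \<and> psd m (D - transpose_mat L * P * L)"
proof -
  define B :: "(bool \<Rightarrow> nat \<Rightarrow> real) \<Rightarrow> (bool \<Rightarrow> nat \<Rightarrow> real) \<Rightarrow> real" where
    "B f g = qform m (P - D) (f False) (g False) + qform m D (f False + f True) (g False + g True)"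
    for f g
  have "linear (\<lambda>f :: bool \<Rightarrow> nat \<Rightarrow> real. f False + f True)"
    by (rule linearI) (simp_all add: algebra_simps)
  then interpret semi_inner_product B
    unfolding B_def
    by (intro semi_inner_product_add semi_inner_product_linear_pullback[OF semi_inner_product_qform]
        D PD linear_apply)
  define x y where "x = coord True" and "y = coord False"
  have Dc: "D \<in> carrier_mat m m" using psd_carrier[OF D] .
  have gram_yy: "gram B m m y y = P"
    by (rule eq_matI) (use P Dc in \<open>auto simp: B_def y_def coord_apply qform_unit\<close>)
  have gram_xy: "gram B m m x y = D"
    by (rule eq_matI) (use Dc in \<open>auto simp: B_def x_def y_def coord_apply qform_unit\<close>)
  have gram_xx: "gram B m m x x = D"
    by (rule eq_matI) (use Dc in \<open>auto simp: B_def x_def coord_apply qform_unit\<close>)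
  obtain p where p: "orth_proj m (y ` {..<m}) x p"
    using orth_proj_exists by blast
  obtain K where K: "K \<in> carrier_mat m m" and p_K: "\<And>i. i < m \<Longrightarrow> p i = lincomb K y i"
    and KP: "K * P = D"
    using orth_proj_coefficients[OF p] gram_xy gram_yy by metis
  have "loewner_ge m (gram B m m x x) (gram B m m p p)"
    using loewner_ge_orth_proj[OF p] .
  moreover have "gram B m m p p = K * P * transpose_mat K"
  proof -
    have "gram B m m p p = gram B m m (lincomb K y) (lincomb K y)"
      using p_K by (intro gram_cong) simp_all
    also have "\<dots> = K * P * transpose_mat K"
      using K by (simp add: gram_lincomb_left gram_lincomb_right gram_yy)
    finally show ?thesis .
  qed
  ultimately have "psd m (D - K * P * transpose_mat K)"
    using gram_xx by (simp add: loewner_ge_def)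
  moreover have "P * transpose_mat K = D"
  proof -
    have "transpose_mat P = P"
      using gram_transpose[of m m y y] gram_yy by simp
    then have "P * transpose_mat K = transpose_mat (K * P)"
      using K P by (simp add: transpose_mult[of K m m P m])
    then show ?thesis
      using KP D by (simp add: psd_def)
  qed
  ultimately show ?thesis
    using K by (intro bexI[of _ "transpose_mat K"]) simp_all
qed

section \<open>The Gauss--Markov model\<close>

definition stack :: "nat \<Rightarrow> (nat \<Rightarrow> nat \<Rightarrow> 'v) \<Rightarrow> nat \<Rightarrow> 'v" where
  "stack m z r = z (r div m) (r mod m)"

lemma blockmat_cong:
  "(\<And>a b. a < p \<Longrightarrow> b < q \<Longrightarrow> F a b = F' a b) \<Longrightarrow> blockmat m p q F = blockmat m p q F'"
  unfolding blockmat_def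
  by (intro cong_mat) (auto simp: less_mult_imp_div_less mult.commute)

lemma gram_stack:
  "gram B (m * p) (m * q) (stack m x) (stack m y) = blockmat m p q (\<lambda>a b. gram B m m (x a) (y b))"
proof (rule eq_matI)
  fix r c
  assume "r < dim_row (blockmat m p q (\<lambda>a b. gram B m m (x a) (y b)))"
    and "c < dim_col (blockmat m p q (\<lambda>a b. gram B m m (x a) (y b)))"
  then have "r < m * p" "c < m * q" by (simp_all add: blockmat_def)
  then have "r mod m < m" "c mod m < m" by (cases "m = 0"; simp)+
  with \<open>r < m * p\<close> \<open>c < m * q\<close>
  show "gram B (m * p) (m * q) (stack m x) (stack m y) $$ (r, c) =
      blockmat m p q (\<lambda>a b. gram B m m (x a) (y b)) $$ (r, c)"
    by (simp add: blockmat_def stack_def)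
qed (simp_all add: blockmat_def)

lemma pow_mat_Suc_left: "A \<in> carrier_mat n n \<Longrightarrow> A ^\<^sub>m Suc k = A * A ^\<^sub>m k"
proof (induction k)
  case (Suc k)
  then have "A ^\<^sub>m Suc (Suc k) = (A * A ^\<^sub>m k) * A" by simp
  also have "\<dots> = A * A ^\<^sub>m Suc k"
    using Suc.prems by (simp add: assoc_mult_mat[of A n n _ n])
  finally show ?case .
qed simp

lemma transpose_pow_mat:
  "(A :: 'a :: comm_semiring_1 mat) \<in> carrier_mat n n \<Longrightarrow> transpose_mat (A ^\<^sub>m k) = transpose_mat A ^\<^sub>m k"
proof (induction k)
  case (Suc k)
  then show ?case
    using pow_mat_Suc_left[of "transpose_mat A" n k] by (simp add: transpose_mult[of _ n n A n])
qed simp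

text \<open>\<open>Process 0\<close> is \<open>x\<^sub>1\<close>, \<open>Process t\<close> is \<open>w\<^sub>t\<close> for \<open>t \<ge> 1\<close>, and \<open>Signal t\<close> is \<open>\<vartheta>\<^sub>t\<close>; a random
  variable is a vector of coefficients of the components of these sources.\<close>

datatype source = Process nat | Signal nat

type_synonym rv = "source \<Rightarrow> nat \<Rightarrow> real"

primrec state :: "real mat \<Rightarrow> nat \<Rightarrow> nat \<Rightarrow> rv" where
  "state A 0 = 0"
| "state A (Suc n) = lincomb A (state A n) + coord (Process n)"

definition signal :: "nat \<Rightarrow> real mat \<Rightarrow> real mat \<Rightarrow> nat \<Rightarrow> nat \<Rightarrow> rv" where
  "signal m A M k = lincomb (transpose_mat M) (stack m (\<lambda>p. state A (k - p))) + coord (Signal k)"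

definition signals :: "nat \<Rightarrow> real mat \<Rightarrow> (nat \<Rightarrow> real mat) \<Rightarrow> nat \<Rightarrow> nat \<Rightarrow> rv" where
  "signals m A L k = stack m (\<lambda>p. signal m A (L (k - p)) (k - p))"

definition supported_on :: "'a set \<Rightarrow> ('a \<Rightarrow> nat \<Rightarrow> real) set" where
  "supported_on R = {f. \<forall>b. b \<notin> R \<longrightarrow> f b = 0}"

lemma subspace_supported_on: "subspace (supported_on R)"
  by (auto simp: subspace_def supported_on_def)

lemma supported_on_mono: "f \<in> supported_on R \<Longrightarrow> R \<subseteq> R' \<Longrightarrow> f \<in> supported_on R'"
  by (auto simp: supported_on_def)

lemma coord_supported_on: "coord a i \<in> supported_on {a}"
  by (simp add: supported_on_def coord_def zero_fun_def)

lemma state_supported_on: "state A k i \<in> supported_on (Process ` {..<k})"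
proof (induction k arbitrary: i)
  case 0
  show ?case by (simp add: supported_on_def zero_fun_def)
next
  case (Suc k)
  have "lincomb A (state A k) i \<in> supported_on (Process ` {..<Suc k})"
    by (intro lincomb_in_subspace subspace_supported_on supported_on_mono[OF Suc.IH]) auto
  moreover have "coord (Process k) i \<in> supported_on (Process ` {..<Suc k})"
    by (rule supported_on_mono[OF coord_supported_on]) auto
  ultimately have "lincomb A (state A k) i + coord (Process k) i \<in> supported_on (Process ` {..<Suc k})"
    by (rule subspace_add[OF subspace_supported_on])
  then show ?case by (metis state.simps(2) plus_fun_apply)
qed

lemma signal_supported_on: "signal m A M k i \<in> supported_on (Process ` {..<k} \<union> {Signal k})"
proof -
  have "stack m (\<lambda>p. state A (k - p)) j \<in> supported_on (Process ` {..<k} \<union> {Signal k})" for j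
    unfolding stack_def by (rule supported_on_mono[OF state_supported_on]) auto
  then have "lincomb (transpose_mat M) (stack m (\<lambda>p. state A (k - p))) i
      \<in> supported_on (Process ` {..<k} \<union> {Signal k})"
    by (intro lincomb_in_subspace subspace_supported_on)
  moreover have "coord (Signal k) i \<in> supported_on (Process ` {..<k} \<union> {Signal k})"
    by (rule supported_on_mono[OF coord_supported_on]) auto
  ultimately have "lincomb (transpose_mat M) (stack m (\<lambda>p. state A (k - p))) i + coord (Signal k) i
      \<in> supported_on (Process ` {..<k} \<union> {Signal k})"
    by (rule subspace_add[OF subspace_supported_on])
  then show ?thesis by (metis signal_def plus_fun_apply)
qed

lemma signals_supported_on: "signals m A L k l \<in> supported_on (Process ` {..<k} \<union> Signal ` {..k})"
  unfolding signals_def stack_def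
  by (rule supported_on_mono[OF signal_supported_on]) auto

lemma span_signals_supported_on:
  assumes "v \<in> span (signals m A L k ` U)"
  shows "v \<in> supported_on (Process ` {..<k} \<union> Signal ` {..k})"
proof -
  have "span (signals m A L k ` U) \<subseteq> supported_on (Process ` {..<k} \<union> Signal ` {..k})"
    using signals_supported_on by (intro span_minimal subspace_supported_on) auto
  then show ?thesis
    using assms by blast
qed

lemma signals_Suc_image:
  "signals m A L (Suc n) ` {..<m * Suc n} =
    signal m A (L (Suc n)) (Suc n) ` {..<m} \<union> signals m A L n ` {..<m * n}"
proof (cases "m = 0")
  case False
  have "{..<m * Suc n} = {..<m} \<union> (\<lambda>l. l + m) ` {..<m * n}"
  proof (intro equalityI subsetI)
    fix r
    assume "r \<in> {..<m * Suc n}"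
    then show "r \<in> {..<m} \<union> (\<lambda>l. l + m) ` {..<m * n}"
      by (cases "r < m") (auto intro: image_eqI[of _ _ "r - m"])
  qed auto
  moreover have "signals m A L (Suc n) r = signal m A (L (Suc n)) (Suc n) r" if "r < m" for r
    using that by (simp add: signals_def stack_def)
  moreover have "signals m A L (Suc n) (l + m) = signals m A L n l" for l
    using False by (simp add: signals_def stack_def)
  ultimately show ?thesis
    by (simp add: image_Un image_image)
qed simp

lemma signal_memoryless:
  assumes G: "G k \<in> carrier_mat m m" and k: "0 < k"
  shows "signal m A (memoryless_L m G k) k = lincomb (transpose_mat (G k)) (state A k) + coord (Signal k)"
proof -
  have "lincomb (transpose_mat (memoryless_L m G k)) (stack m (\<lambda>p. state A (k - p))) i =
      lincomb (transpose_mat (G k)) (state A k) i" for i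
  proof (cases "i < m")
    case True
    have mk: "r < m * k" if "r < m" for r
      using k that by (cases k) auto
    have "lincomb (transpose_mat (memoryless_L m G k)) (stack m (\<lambda>p. state A (k - p))) i =
        (\<Sum>r<m * k. transpose_mat (memoryless_L m G k) $$ (i, r) *\<^sub>R stack m (\<lambda>p. state A (k - p)) r)"
      using True by (simp add: lincomb_def memoryless_L_def)
    also have "\<dots> = (\<Sum>r<m. transpose_mat (memoryless_L m G k) $$ (i, r) *\<^sub>R stack m (\<lambda>p. state A (k - p)) r)"
      using True k by (intro sum.mono_neutral_right) (auto simp: memoryless_L_def)
    also have "\<dots> = (\<Sum>r<m. transpose_mat (G k) $$ (i, r) *\<^sub>R state A k r)"
      using True mk G by (intro sum.cong) (auto simp: memoryless_L_def stack_def)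
    also have "\<dots> = lincomb (transpose_mat (G k)) (state A k) i"
      using True G by (simp add: lincomb_def)
    finally show ?thesis .
  next
    case False
    then show ?thesis
      using G by (simp add: lincomb_def memoryless_L_def)
  qed
  then show ?thesis
    by (simp add: signal_def fun_eq_iff)
qed

text \<open>The Kalman filter \<open>xh\<^sub>k = A xh\<^sub>k\<^sub>-\<^sub>1 + (s\<^sub>k - G\<^sub>k' A xh\<^sub>k\<^sub>-\<^sub>1)\<close> for the memoryless signals
  \<open>s\<^sub>k = G\<^sub>k' x\<^sub>k + \<vartheta>\<^sub>k\<close>.\<close>

primrec estimate :: "real mat \<Rightarrow> (nat \<Rightarrow> real mat) \<Rightarrow> nat \<Rightarrow> nat \<Rightarrow> rv" where
  "estimate A G 0 = 0"
| "estimate A G (Suc n) = lincomb A (estimate A G n) +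
    (lincomb (transpose_mat (G (Suc n))) (state A (Suc n) - lincomb A (estimate A G n)) + coord (Signal (Suc n)))"

lemma signaling_rule_carrier: "signaling_rule m \<kappa> L Th \<Longrightarrow> j \<in> {1..\<kappa>} \<Longrightarrow> L j \<in> carrier_mat (m * j) m"
  by (simp add: signaling_rule_def)

locale gauss_markov =
  fixes m \<kappa> :: nat and A S1 Sw :: "real mat" and Th :: "nat \<Rightarrow> real mat"
  assumes A: "A \<in> carrier_mat m m" and S1: "psd m S1" and Sw: "psd m Sw"
    and Th: "\<And>t. t \<in> {1..\<kappa>} \<Longrightarrow> psd m (Th t)"
begin

definition noise_cov :: "nat \<Rightarrow> real mat" where
  "noise_cov t = (if t = 0 then S1 else Sw)"

definition cov :: "rv \<Rightarrow> rv \<Rightarrow> real" where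
  "cov f g = (\<Sum>t<\<kappa>. qform m (noise_cov t) (f (Process t)) (g (Process t))) +
     (\<Sum>t\<in>{1..\<kappa>}. qform m (Th t) (f (Signal t)) (g (Signal t)))"

lemma psd_noise_cov: "psd m (noise_cov t)"
  using S1 Sw by (simp add: noise_cov_def)

sublocale semi_inner_product cov
  unfolding cov_def
  by (intro semi_inner_product_add semi_inner_product_sum
      semi_inner_product_linear_pullback[OF semi_inner_product_qform] linear_apply psd_noise_cov Th)

lemma cov_disjoint_support:
  assumes "f \<in> supported_on R" and "g \<in> supported_on R'" and "R \<inter> R' = {}"
  shows "cov f g = 0"
proof -
  have "f b = 0 \<or> g b = 0" for b
    using assms by (auto simp: supported_on_def)
  then have "qform m M (f b) (g b) = 0" for M b
    by (metis qform_zero)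
  then show ?thesis
    by (simp add: cov_def)
qed

lemma gram_process_noise:
  assumes "t < \<kappa>"
  shows "gram cov m m (coord (Process t)) (coord (Process t)) = noise_cov t"
proof (rule eq_matI)
  fix i j
  assume "i < dim_row (noise_cov t)" and "j < dim_col (noise_cov t)"
  then have ij: "i < m" "j < m"
    using carrier_matD[OF psd_carrier[OF psd_noise_cov[of t]]] by auto
  have "(\<Sum>s<\<kappa>. qform m (noise_cov s) (coord (Process t) i (Process s)) (coord (Process t) j (Process s)))
      = (\<Sum>s<\<kappa>. if s = t then noise_cov t $$ (i, j) else 0)"
    using ij by (intro sum.cong) (auto simp: coord_apply qform_unit)
  then show "gram cov m m (coord (Process t)) (coord (Process t)) $$ (i, j) = noise_cov t $$ (i, j)"
    using ij assms by (simp add: cov_def coord_apply)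
qed (use carrier_matD[OF psd_carrier[OF psd_noise_cov[of t]]] in auto)

lemma gram_signal_noise:
  assumes a: "a \<in> {1..\<kappa>}" and b: "b \<in> {1..\<kappa>}"
  shows "gram cov m m (coord (Signal a)) (coord (Signal b)) = (if a = b then Th a else 0\<^sub>m m m)"
proof (cases "a = b")
  case True
  have Th_a: "Th a \<in> carrier_mat m m"
    using psd_carrier[OF Th[OF a]] .
  show ?thesis
  proof (rule eq_matI)
    fix i j
    assume "i < dim_row (if a = b then Th a else 0\<^sub>m m m)" "j < dim_col (if a = b then Th a else 0\<^sub>m m m)"
    then have ij: "i < m" "j < m"
      using Th_a True by auto
    have "(\<Sum>s\<in>{1..\<kappa>}. qform m (Th s) (coord (Signal a) i (Signal s)) (coord (Signal a) j (Signal s)))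
        = (\<Sum>s\<in>{1..\<kappa>}. if s = a then Th a $$ (i, j) else 0)"
      using ij by (intro sum.cong) (auto simp: coord_apply qform_unit)
    then show "gram cov m m (coord (Signal a)) (coord (Signal b)) $$ (i, j) =
        (if a = b then Th a else 0\<^sub>m m m) $$ (i, j)"
      using ij a True by (simp add: cov_def coord_apply)
  qed (use Th_a True in auto)
next
  case False
  have "cov (coord (Signal a) i) (coord (Signal b) j) = 0" for i j
    using False by (intro cov_disjoint_support[OF coord_supported_on coord_supported_on]) auto
  then show ?thesis
    using False by (simp add: gram_eq_zero)
qed

lemma gram_state_Suc:
  assumes "n < \<kappa>"
  shows "gram cov m m (state A (Suc n)) (state A (Suc n)) =
    A * gram cov m m (state A n) (state A n) * transpose_mat A + noise_cov n"
proof -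
  let ?x = "state A n" and ?w = "coord (Process n)"
  have orth: "cov (?x i) (?w j) = 0" for i j
    by (rule cov_disjoint_support[OF state_supported_on coord_supported_on]) auto
  have "gram cov m m (lincomb A ?x) ?w = 0\<^sub>m m m" "gram cov m m ?w (lincomb A ?x) = 0\<^sub>m m m"
    using A orth by (simp_all add: gram_lincomb_left gram_lincomb_right gram_eq_zero sym[of "?w _"])
  moreover have "gram cov m m ?w ?w = noise_cov n"
    using gram_process_noise[OF assms] .
  moreover have "noise_cov n \<in> carrier_mat m m"
    using psd_carrier[OF psd_noise_cov] .
  moreover have "A * gram cov m m ?x ?x * transpose_mat A \<in> carrier_mat m m"
    by (rule mult_carrier_mat[OF mult_carrier_mat[OF A gram_carrier]]) (simp add: A)
  ultimately show ?thesis
    using A by (simp add: gram_add_left gram_add_right gram_lincomb_left gram_lincomb_right)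
qed

lemma gram_state_scov: "n < \<kappa> \<Longrightarrow> gram cov m m (state A (Suc n)) (state A (Suc n)) = scov A S1 Sw n"
proof (induction n)
  case 0
  have "gram cov m m (state A 0) (state A 0) = 0\<^sub>m m m"
    by (simp add: gram_eq_zero)
  then show ?case
    using gram_state_Suc[OF 0] A psd_carrier[OF S1] by (simp add: noise_cov_def del: state.simps)
next
  case (Suc n)
  then show ?case
    using gram_state_Suc[OF Suc.prems] by (simp add: noise_cov_def del: state.simps)
qed

lemma gram_state_Sigma_o:
  assumes "k \<in> {1..\<kappa>}"
  shows "gram cov m m (state A k) (state A k) = Sigma_o A S1 Sw k"
proof -
  obtain n where "k = Suc n" "n < \<kappa>"
    using assms by (cases k) auto
  then show ?thesis
    using gram_state_scov by (simp add: Sigma_o_def del: state.simps)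
qed

lemma gram_state_lag:
  assumes "b \<le> a" and "a \<le> \<kappa>"
  shows "gram cov m m (state A a) (state A b) = A ^\<^sub>m (a - b) * gram cov m m (state A b) (state A b)"
  using assms
proof (induction a)
  case 0
  then show ?case using A by simp
next
  case (Suc a)
  show ?case
  proof (cases "b = Suc a")
    case False
    then have ba: "b \<le> a" using Suc.prems by simp
    have "cov (coord (Process a) i) (state A b j) = 0" for i j
      using ba by (intro cov_disjoint_support[OF coord_supported_on state_supported_on]) auto
    then have "gram cov m m (coord (Process a)) (state A b) = 0\<^sub>m m m"
      by (simp add: gram_eq_zero)
    then have "gram cov m m (state A (Suc a)) (state A b) = A * gram cov m m (state A a) (state A b)"
      using A by (simp add: gram_add_left gram_lincomb_left)
    also have "\<dots> = (A * A ^\<^sub>m (a - b)) * gram cov m m (state A b) (state A b)"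
      using Suc ba A by (simp add: assoc_mult_mat[of A m m _ m _ m])
    also have "A * A ^\<^sub>m (a - b) = A ^\<^sub>m (Suc a - b)"
      using pow_mat_Suc_left[OF A] ba by (simp add: Suc_diff_le)
    finally show ?thesis .
  qed (use A in \<open>simp del: state.simps\<close>)
qed

lemma gram_state_xcov:
  assumes a: "a \<in> {1..\<kappa>}" and b: "b \<in> {1..\<kappa>}"
  shows "gram cov m m (state A a) (state A b) = xcov A S1 Sw a b"
proof (cases "b \<le> a")
  case True
  then have "gram cov m m (state A a) (state A b) = A ^\<^sub>m (a - b) * gram cov m m (state A b) (state A b)"
    using a by (intro gram_state_lag) auto
  then show ?thesis
    using True gram_state_Sigma_o[OF b] by (simp add: xcov_def)
next
  case False
  then have "gram cov m m (state A b) (state A a) = A ^\<^sub>m (b - a) * Sigma_o A S1 Sw a"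
    using b gram_state_lag[of a b] gram_state_Sigma_o[OF a] by simp
  then have "gram cov m m (state A a) (state A b) = transpose_mat (A ^\<^sub>m (b - a) * Sigma_o A S1 Sw a)"
    by (metis gram_transpose)
  also have "\<dots> = Sigma_o A S1 Sw a * transpose_mat A ^\<^sub>m (b - a)"
    using A gram_state_Sigma_o[OF a, symmetric]
    by (simp add: transpose_mult[of _ m m _ m] transpose_pow_mat gram_transpose)
  finally show ?thesis
    using False by (simp add: xcov_def)
qed

lemma stackcov_gram:
  assumes "a \<in> {1..\<kappa>}" and "b \<in> {1..\<kappa>}"
  shows "stackcov m A S1 Sw a b =
    gram cov (m * a) (m * b) (stack m (\<lambda>p. state A (a - p))) (stack m (\<lambda>p. state A (b - p)))"
  unfolding stackcov_def gram_stack
  using assms by (intro blockmat_cong gram_state_xcov[symmetric]) auto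

lemma gram_signal:
  assumes a: "a \<in> {1..\<kappa>}" and b: "b \<in> {1..\<kappa>}"
    and Ma: "Ma \<in> carrier_mat (m * a) m" and Mb: "Mb \<in> carrier_mat (m * b) m"
  shows "gram cov m m (signal m A Ma a) (signal m A Mb b) =
    transpose_mat Ma * stackcov m A S1 Sw a b * Mb + (if a = b then Th a else 0\<^sub>m m m)"
proof -
  let ?xa = "stack m (\<lambda>p. state A (a - p))" and ?xb = "stack m (\<lambda>p. state A (b - p))"
  have stack_supported: "?xa j \<in> supported_on (range Process)" "?xb j \<in> supported_on (range Process)" for j
    unfolding stack_def by (auto intro: supported_on_mono[OF state_supported_on])
  have "cov (lincomb (transpose_mat Ma) ?xa i) (coord (Signal b) j) = 0" for i j
    using stack_supported
    by (intro cov_disjoint_support[OF lincomb_in_subspace[OF subspace_supported_on] coord_supported_on]) auto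
  moreover have "cov (coord (Signal a) i) (lincomb (transpose_mat Mb) ?xb j) = 0" for i j
    using stack_supported
    by (intro cov_disjoint_support[OF coord_supported_on lincomb_in_subspace[OF subspace_supported_on]]) auto
  moreover have "gram cov m m (lincomb (transpose_mat Ma) ?xa) (lincomb (transpose_mat Mb) ?xb) =
      transpose_mat Ma * stackcov m A S1 Sw a b * Mb"
    using Ma Mb stackcov_gram[OF a b]
    by (simp add: gram_lincomb_left gram_lincomb_right assoc_mult_mat[of _ m "m * a" _ "m * b" _ m])
  moreover have "stackcov m A S1 Sw a b \<in> carrier_mat (m * a) (m * b)"
    by (simp add: stackcov_def blockmat_def)
  then have "transpose_mat Ma * stackcov m A S1 Sw a b * Mb \<in> carrier_mat m m"
    using Ma by (intro mult_carrier_mat[OF mult_carrier_mat Mb]) simp_all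
  moreover have "(if a = b then Th a else 0\<^sub>m m m) \<in> carrier_mat m m"
    using psd_carrier[OF Th[OF a]] by auto
  ultimately show ?thesis
    by (simp add: signal_def gram_add_left gram_add_right gram_eq_zero gram_signal_noise[OF a b])
qed

lemma sig_cov_gram:
  assumes L: "signaling_rule m \<kappa> L Th" and k: "k \<le> \<kappa>"
  shows "sig_cov m A S1 Sw L Th k = gram cov (m * k) (m * k) (signals m A L k) (signals m A L k)"
  unfolding sig_cov_def signals_def gram_stack
proof (intro blockmat_cong)
  fix a b
  assume "a < k" and "b < k"
  then have ab: "k - a \<in> {1..\<kappa>}" "k - b \<in> {1..\<kappa>}"
    using k by auto
  show "(let a' = k - a; b' = k - b in
        transpose_mat (L a') * stackcov m A S1 Sw a' b' * L b' + (if a' = b' then Th a' else 0\<^sub>m m m)) =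
      gram cov m m (signal m A (L (k - a)) (k - a)) (signal m A (L (k - b)) (k - b))"
    by (simp add: Let_def gram_signal[OF ab signaling_rule_carrier[OF L ab(1)] signaling_rule_carrier[OF L ab(2)]])
qed

lemma rowcov_gram:
  assumes "a \<in> {1..\<kappa>}" and "b \<in> {1..\<kappa>}"
  shows "rowcov m A S1 Sw a b = gram cov m (m * b) (state A a) (stack m (\<lambda>p. state A (b - p)))"
proof -
  have "rowcov m A S1 Sw a b = gram cov (m * 1) (m * b) (stack m (\<lambda>_. state A a)) (stack m (\<lambda>p. state A (b - p)))"
    unfolding rowcov_def gram_stack using assms by (intro blockmat_cong gram_state_xcov[symmetric]) auto
  also have "\<dots> = gram cov m (m * b) (state A a) (stack m (\<lambda>p. state A (b - p)))"
    unfolding mult_1_right by (intro gram_cong) (simp_all add: stack_def)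
  finally show ?thesis .
qed

lemma gram_state_signal:
  assumes k: "k \<in> {1..\<kappa>}" and b: "b \<in> {1..\<kappa>}" and M: "M \<in> carrier_mat (m * b) m"
  shows "gram cov m m (state A k) (signal m A M b) = rowcov m A S1 Sw k b * M"
proof -
  have "cov (state A k i) (coord (Signal b) j) = 0" for i j
    by (rule cov_disjoint_support[OF state_supported_on coord_supported_on]) auto
  then have "gram cov m m (state A k) (coord (Signal b)) = 0\<^sub>m m m"
    by (simp add: gram_eq_zero)
  moreover have "rowcov m A S1 Sw k b * M \<in> carrier_mat m m"
    by (intro mult_carrier_mat[OF _ M]) (simp add: rowcov_def blockmat_def)
  ultimately show ?thesis
    using M rowcov_gram[OF k b] by (simp add: signal_def gram_add_right gram_lincomb_right)
qed

lemma cross_cov_gram: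
  assumes L: "signaling_rule m \<kappa> L Th" and k: "k \<in> {1..\<kappa>}"
  shows "cross_cov m A S1 Sw L k = gram cov m (m * k) (state A k) (signals m A L k)"
proof -
  have "cross_cov m A S1 Sw L k = gram cov (m * 1) (m * k) (stack m (\<lambda>_. state A k)) (signals m A L k)"
    unfolding cross_cov_def signals_def gram_stack
  proof (intro blockmat_cong)
    fix a b
    assume "b < k"
    then have b': "k - b \<in> {1..\<kappa>}"
      using k by auto
    show "(let b' = k - b in rowcov m A S1 Sw k b' * L b') =
        gram cov m m (state A k) (signal m A (L (k - b)) (k - b))"
      using gram_state_signal[OF k b' signaling_rule_carrier[OF L b']] by (simp add: Let_def)
  qed
  also have "\<dots> = gram cov m (m * k) (state A k) (signals m A L k)"
    unfolding mult_1_right by (intro gram_cong) (simp_all add: stack_def)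
  finally show ?thesis .
qed

lemma Hcov_eq_gram_orth_proj:
  assumes L: "signaling_rule m \<kappa> L Th" and k: "k \<in> {1..\<kappa>}"
    and p: "orth_proj m (signals m A L k ` {..<m * k}) (state A k) p"
  shows "Hcov m A S1 Sw L Th k = gram cov m m p p"
proof -
  have "k \<le> \<kappa>" using k by simp
  have sig_cov: "sig_cov m A S1 Sw L Th k = gram cov (m * k) (m * k) (signals m A L k) (signals m A L k)"
    by (rule sig_cov_gram[OF L \<open>k \<le> \<kappa>\<close>])
  have cross_cov: "cross_cov m A S1 Sw L k = gram cov m (m * k) (state A k) (signals m A L k)"
    by (rule cross_cov_gram[OF L k])
  show ?thesis
    unfolding Hcov_def sig_cov cross_cov by (rule cond_mean_cov_gram[OF p])
qed

section \<open>Necessity of the bounds\<close>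

lemma prediction_error:
  assumes n: "n < \<kappa>" and xh: "orth_proj m (signals m A L n ` {..<m * n}) (state A n) xh"
  defines "u \<equiv> state A (Suc n) - lincomb A xh"
  shows prediction_error_orthogonal:
      "\<And>i w. i < m \<Longrightarrow> w \<in> span (signals m A L n ` {..<m * n}) \<Longrightarrow> cov (u i) w = 0"
    and prediction_error_supported_on: "\<And>i. u i \<in> supported_on (Process ` {..<Suc n} \<union> Signal ` {..n})"
    and gram_prediction_error:
      "gram cov m m u u = Sigma_o A S1 Sw (Suc n) - A * gram cov m m xh xh * transpose_mat A"
proof -
  let ?U = "signals m A L n ` {..<m * n}"
  have z_span: "lincomb A xh i \<in> span ?U" for i
    using xh A by (intro lincomb_in_subspace) (auto simp: orth_proj_def)
  have u_eq: "u = lincomb A (state A n - xh) + coord (Process n)"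
    by (simp add: u_def lincomb_diff algebra_simps)
  show orth: "cov (u i) w = 0" if i: "i < m" and w: "w \<in> span ?U" for i w
  proof -
    have "cov (lincomb A (state A n - xh) i) w = 0"
      using A orth_proj_orthogonal[OF xh _ w] by (intro orthogonal_lincomb_left) simp
    moreover have "cov (coord (Process n) i) w = 0"
      by (rule cov_disjoint_support[OF coord_supported_on span_signals_supported_on[OF w]]) auto
    ultimately show ?thesis
      by (simp add: u_eq add_left)
  qed
  show "u i \<in> supported_on (Process ` {..<Suc n} \<union> Signal ` {..n})" for i
  proof -
    have "state A (Suc n) i \<in> supported_on (Process ` {..<Suc n} \<union> Signal ` {..n})"
      by (rule supported_on_mono[OF state_supported_on]) auto
    moreover have "lincomb A xh i \<in> supported_on (Process ` {..<Suc n} \<union> Signal ` {..n})"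
      by (rule supported_on_mono[OF span_signals_supported_on[OF z_span]]) auto
    ultimately have "state A (Suc n) i - lincomb A xh i \<in> supported_on (Process ` {..<Suc n} \<union> Signal ` {..n})"
      by (rule subspace_diff[OF subspace_supported_on])
    then show ?thesis
      by (metis u_def minus_apply)
  qed
  have "gram cov m m (state A (Suc n)) (state A (Suc n)) =
      gram cov m m (lincomb A xh) (lincomb A xh) + gram cov m m u u"
    unfolding u_def using orth z_span by (intro gram_pythagoras) (simp add: u_def)
  moreover have "gram cov m m (lincomb A xh) (lincomb A xh) = A * gram cov m m xh xh * transpose_mat A"
    using A by (simp add: gram_lincomb_left gram_lincomb_right)
  moreover have "gram cov m m (state A (Suc n)) (state A (Suc n)) = Sigma_o A S1 Sw (Suc n)"
    using n by (intro gram_state_Sigma_o) simp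
  ultimately have "Sigma_o A S1 Sw (Suc n) = A * gram cov m m xh xh * transpose_mat A + gram cov m m u u"
    by simp
  moreover have "A * gram cov m m xh xh * transpose_mat A + gram cov m m u u - A * gram cov m m xh xh * transpose_mat A
      = gram cov m m u u"
    using carrier_matD[OF A] by (intro eq_matI) auto
  ultimately show "gram cov m m u u = Sigma_o A S1 Sw (Suc n) - A * gram cov m m xh xh * transpose_mat A"
    by simp
qed

lemma orth_proj_signals_exists:
  obtains p where "orth_proj m (signals m A L k ` {..<m * k}) (state A k) p"
  using orth_proj_exists by blast

lemma loewner_ge_Sigma_o_Hcov:
  assumes L: "signaling_rule m \<kappa> L Th" and k: "k \<in> {1..\<kappa>}"
  shows "loewner_ge m (Sigma_o A S1 Sw k) (Hcov m A S1 Sw L Th k)"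
proof -
  obtain p where p: "orth_proj m (signals m A L k ` {..<m * k}) (state A k) p"
    by (rule orth_proj_signals_exists)
  show ?thesis
    using loewner_ge_orth_proj[OF p] Hcov_eq_gram_orth_proj[OF L k p] gram_state_Sigma_o[OF k] by simp
qed

lemma loewner_ge_Hcov_zero:
  assumes L: "signaling_rule m \<kappa> L Th" and k: "k \<in> {1..\<kappa>}"
  shows "loewner_ge m (Hcov m A S1 Sw L Th k) (0\<^sub>m m m)"
proof -
  obtain p where p: "orth_proj m (signals m A L k ` {..<m * k}) (state A k) p"
    by (rule orth_proj_signals_exists)
  have "gram cov m m p p - 0\<^sub>m m m = gram cov m m p p"
    by (rule eq_matI) auto
  then show ?thesis
    using Hcov_eq_gram_orth_proj[OF L k p] psd_gram by (simp add: loewner_ge_def)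
qed

lemma loewner_ge_Hcov_Suc:
  assumes L: "signaling_rule m \<kappa> L Th" and n: "n \<in> {1..<\<kappa>}"
  shows "loewner_ge m (Hcov m A S1 Sw L Th (Suc n)) (A * Hcov m A S1 Sw L Th n * transpose_mat A)"
proof -
  have n': "n < \<kappa>" "n \<in> {1..\<kappa>}" "Suc n \<in> {1..\<kappa>}"
    using n by auto
  obtain p where p: "orth_proj m (signals m A L (Suc n) ` {..<m * Suc n}) (state A (Suc n)) p"
    by (rule orth_proj_signals_exists)
  obtain q where q: "orth_proj m (signals m A L n ` {..<m * n}) (state A n) q"
    by (rule orth_proj_signals_exists)
  define z where "z = lincomb A q"
  have z_span: "z j \<in> span (signals m A L n ` {..<m * n})" for j
    unfolding z_def using q A by (intro lincomb_in_subspace) (auto simp: orth_proj_def)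
  then have z_span_Suc: "z j \<in> span (signals m A L (Suc n) ` {..<m * Suc n})" for j
    unfolding signals_Suc_image by (rule subsetD[OF span_mono, rotated]) auto
  have "cov (p i - z i) (z j) = 0" if "i < m" for i j
  proof -
    have "cov ((state A (Suc n) - z) i) (z j) = 0"
      unfolding z_def using prediction_error_orthogonal[OF n'(1) q that z_span[of j, unfolded z_def]] .
    moreover have "cov (state A (Suc n) i - p i) (z j) = 0"
      using orth_proj_orthogonal[OF p that z_span_Suc] .
    moreover have "p i - z i = (state A (Suc n) - z) i - (state A (Suc n) i - p i)"
      by (simp del: state.simps)
    then have "cov (p i - z i) (z j) = cov ((state A (Suc n) - z) i) (z j) - cov (state A (Suc n) i - p i) (z j)"
      by (simp only: diff_left)
    ultimately show ?thesis
      by simp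
  qed
  then have "loewner_ge m (gram cov m m p p) (gram cov m m z z)"
    by (intro loewner_ge_gram)
  moreover have "gram cov m m z z = A * gram cov m m q q * transpose_mat A"
    using A by (simp add: z_def gram_lincomb_left gram_lincomb_right)
  ultimately show ?thesis
    unfolding Hcov_eq_gram_orth_proj[OF L n'(2) q] Hcov_eq_gram_orth_proj[OF L n'(3) p] by (simp only:)
qed

section \<open>Realizing prescribed covariances\<close>

lemma innovation:
  assumes n: "n < \<kappa>" and xh: "orth_proj m (signals m A L n ` {..<m * n}) (state A n) xh"
    and M: "M \<in> carrier_mat m m"
  defines "u \<equiv> state A (Suc n) - lincomb A xh"
    and "\<nu> \<equiv> lincomb (transpose_mat M) (state A (Suc n) - lincomb A xh) + coord (Signal (Suc n))"
  shows innovation_orthogonal: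
      "\<And>i w. i < m \<Longrightarrow> w \<in> span (signals m A L n ` {..<m * n}) \<Longrightarrow> cov (\<nu> i) w = 0"
    and gram_prediction_error_innovation: "gram cov m m u \<nu> = gram cov m m u u * M"
    and gram_innovation: "gram cov m m \<nu> \<nu> = transpose_mat M * gram cov m m u u * M + Th (Suc n)"
proof -
  let ?\<theta> = "coord (Signal (Suc n))"
  have \<nu>_def: "\<nu> = lincomb (transpose_mat M) u + ?\<theta>"
    by (simp add: \<nu>_def u_def)
  have Suc_n: "Suc n \<in> {1..\<kappa>}"
    using n by simp
  show "cov (\<nu> i) w = 0" if i: "i < m" and w: "w \<in> span (signals m A L n ` {..<m * n})" for i w
  proof -
    have "cov (lincomb (transpose_mat M) u i) w = 0"
      using M prediction_error_orthogonal[OF n xh _ w] by (intro orthogonal_lincomb_left) (simp add: u_def)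
    moreover have "cov (?\<theta> i) w = 0"
      by (rule cov_disjoint_support[OF coord_supported_on span_signals_supported_on[OF w]]) auto
    ultimately show ?thesis
      by (simp add: \<nu>_def add_left)
  qed
  have "cov (u i) (?\<theta> j) = 0" for i j
    using prediction_error_supported_on[OF n xh]
    by (intro cov_disjoint_support[OF _ coord_supported_on]) (auto simp: u_def)
  then have u_\<theta>: "gram cov m m u ?\<theta> = 0\<^sub>m m m" and \<theta>_u: "gram cov m m ?\<theta> u = 0\<^sub>m m m"
    by (auto intro!: gram_eq_zero simp: sym[of "?\<theta> _"])
  have "gram cov m m u u * M \<in> carrier_mat m m"
    using mult_carrier_mat[OF gram_carrier M] .
  then show "gram cov m m u \<nu> = gram cov m m u u * M"
    using M u_\<theta> by (simp add: \<nu>_def gram_add_right gram_lincomb_right)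
  have "gram cov m m (lincomb (transpose_mat M) u) ?\<theta> = 0\<^sub>m m m"
    "gram cov m m ?\<theta> (lincomb (transpose_mat M) u) = 0\<^sub>m m m"
    using M u_\<theta> \<theta>_u by (simp_all add: gram_lincomb_left gram_lincomb_right)
  moreover have "transpose_mat M * gram cov m m u u * M \<in> carrier_mat m m"
    using M by (intro mult_carrier_mat[OF mult_carrier_mat[OF _ gram_carrier] M]) simp
  moreover have "Th (Suc n) \<in> carrier_mat m m"
    using psd_carrier[OF Th[OF Suc_n]] .
  ultimately show "gram cov m m \<nu> \<nu> = transpose_mat M * gram cov m m u u * M + Th (Suc n)"
    using M gram_signal_noise[OF Suc_n Suc_n]
    by (simp add: \<nu>_def gram_add_left gram_add_right gram_lincomb_left gram_lincomb_right)
qed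

lemma estimate_step:
  fixes n :: nat and S S' :: "real mat"
  defines "P \<equiv> Sigma_o A S1 Sw (Suc n) - A * S * transpose_mat A"
    and "D \<equiv> S' - A * S * transpose_mat A"
  assumes n: "n < \<kappa>" and G: "G (Suc n) \<in> carrier_mat m m" and S': "S' \<in> carrier_mat m m"
    and xh: "orth_proj m (signals m A (memoryless_L m G) n ` {..<m * n}) (state A n) (estimate A G n)"
    and gram_xh: "gram cov m m (estimate A G n) (estimate A G n) = S"
    and gain: "P * G (Suc n) = D"
    and Th_Suc: "Th (Suc n) = D - transpose_mat (G (Suc n)) * P * G (Suc n)"
  shows "orth_proj m (signals m A (memoryless_L m G) (Suc n) ` {..<m * Suc n}) (state A (Suc n))
      (estimate A G (Suc n))"
    and "gram cov m m (estimate A G (Suc n)) (estimate A G (Suc n)) = S'"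
proof -
  let ?U = "signals m A (memoryless_L m G) n ` {..<m * n}"
  define z u \<nu> where "z = lincomb A (estimate A G n)" and "u = state A (Suc n) - z"
    and "\<nu> = lincomb (transpose_mat (G (Suc n))) u + coord (Signal (Suc n))"
  note defs = z_def u_def \<nu>_def
  have z_span: "z i \<in> span ?U" for i
    using xh A unfolding z_def by (intro lincomb_in_subspace) (auto simp: orth_proj_def)
  have uu: "gram cov m m u u = P"
    using gram_prediction_error[OF n xh] gram_xh by (simp add: defs P_def)
  have u\<nu>: "gram cov m m u \<nu> = D"
    using gram_prediction_error_innovation[OF n xh G] uu gain by (simp add: defs)
  have "gram cov m m \<nu> \<nu> = transpose_mat (G (Suc n)) * P * G (Suc n) + (D - transpose_mat (G (Suc n)) * P * G (Suc n))"
    using gram_innovation[OF n xh G] uu Th_Suc by (simp add: defs)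
  also have "\<dots> = D"
    using G S' A by (intro eq_matI) (auto simp: D_def P_def)
  finally have \<nu>\<nu>: "gram cov m m \<nu> \<nu> = D" .
  have u_orth: "cov (u i) v = 0" if "i < m" "v \<in> ?U" for i v
    unfolding u_def z_def using that by (intro prediction_error_orthogonal[OF n xh] span_base)
  have \<nu>_orth: "cov (\<nu> i) v = 0" if "i < m" "v \<in> ?U" for i v
    unfolding \<nu>_def u_def z_def using that by (intro innovation_orthogonal[OF n xh G] span_base)
  have u_\<nu>: "cov (u i) (\<nu> j) = cov (\<nu> i) (\<nu> j)" if "i < m" "j < m" for i j
    using u\<nu> \<nu>\<nu> that by (metis index_gram)
  have "dim_col (transpose_mat (G (Suc n))) = m"
    using G by simp
  note upd = innovation_update[of m z ?U u \<nu>, OF z_span u_orth \<nu>_orth u_\<nu> this]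
  have "\<nu> + lincomb (transpose_mat (G (Suc n))) z = signal m A (memoryless_L m G (Suc n)) (Suc n)"
    using signal_memoryless[where G = G and k = "Suc n", OF G] by (simp add: defs lincomb_add[symmetric])
  then have "?U \<union> (\<nu> + lincomb (transpose_mat (G (Suc n))) z) ` {..<m} =
      signals m A (memoryless_L m G) (Suc n) ` {..<m * Suc n}"
    unfolding signals_Suc_image by (simp add: Un_commute)
  moreover have "z + u = state A (Suc n)" "z + \<nu> = estimate A G (Suc n)"
    by (simp_all add: defs)
  ultimately show "orth_proj m (signals m A (memoryless_L m G) (Suc n) ` {..<m * Suc n}) (state A (Suc n))
      (estimate A G (Suc n))"
    using upd(1) by simp
  have "gram cov m m z z = A * S * transpose_mat A"
    using A gram_xh by (simp add: z_def gram_lincomb_left gram_lincomb_right)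
  then have "gram cov m m (z + \<nu>) (z + \<nu>) = A * S * transpose_mat A + (S' - A * S * transpose_mat A)"
    using upd(2) \<nu>\<nu> by (simp add: D_def)
  also have "\<dots> = S'"
    using S' A by (intro eq_matI) auto
  finally show "gram cov m m (estimate A G (Suc n)) (estimate A G (Suc n)) = S'"
    using \<open>z + \<nu> = estimate A G (Suc n)\<close> by simp
qed

lemma signaling_rule_memoryless: "signaling_rule m \<kappa> (memoryless_L m G) Th"
  using Th by (simp add: signaling_rule_def memoryless_L_def)

lemma Hcov_memoryless:
  fixes G S :: "nat \<Rightarrow> real mat"
  assumes S0: "S 0 = 0\<^sub>m m m"
    and S: "\<And>k. k \<in> {1..\<kappa>} \<Longrightarrow> S k \<in> carrier_mat m m"
    and G: "\<And>k. k \<in> {1..\<kappa>} \<Longrightarrow> G k \<in> carrier_mat m m"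
    and gain: "\<And>k. k \<in> {1..\<kappa>} \<Longrightarrow>
      (Sigma_o A S1 Sw k - A * S (k - 1) * transpose_mat A) * G k = S k - A * S (k - 1) * transpose_mat A"
    and Th_eq: "\<And>k. k \<in> {1..\<kappa>} \<Longrightarrow>
      Th k = (S k - A * S (k - 1) * transpose_mat A)
        - transpose_mat (G k) * (Sigma_o A S1 Sw k - A * S (k - 1) * transpose_mat A) * G k"
    and k: "k \<in> {1..\<kappa>}"
  shows "Hcov m A S1 Sw (memoryless_L m G) Th k = S k"
proof -
  have "orth_proj m (signals m A (memoryless_L m G) n ` {..<m * n}) (state A n) (estimate A G n) \<and>
      gram cov m m (estimate A G n) (estimate A G n) = S n" if "n \<le> \<kappa>" for n
    using that
  proof (induction n)
    case 0
    have "gram cov m m 0 0 = 0\<^sub>m m m"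
      by (rule gram_eq_zero) simp
    then show ?case
      using S0 by (simp add: orth_proj_def zero_fun_def)
  next
    case (Suc n)
    then have n: "n < \<kappa>" and Suc_n: "Suc n \<in> {1..\<kappa>}"
      by auto
    have IH: "orth_proj m (signals m A (memoryless_L m G) n ` {..<m * n}) (state A n) (estimate A G n)"
      "gram cov m m (estimate A G n) (estimate A G n) = S n"
      using Suc.IH n by auto
    have "(Sigma_o A S1 Sw (Suc n) - A * S n * transpose_mat A) * G (Suc n) = S (Suc n) - A * S n * transpose_mat A"
      "Th (Suc n) = (S (Suc n) - A * S n * transpose_mat A)
        - transpose_mat (G (Suc n)) * (Sigma_o A S1 Sw (Suc n) - A * S n * transpose_mat A) * G (Suc n)"
      using gain[OF Suc_n] Th_eq[OF Suc_n] by simp_all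
    then show ?case
      using estimate_step[OF n G[OF Suc_n] S[OF Suc_n] IH] by blast
  qed
  then have "orth_proj m (signals m A (memoryless_L m G) k ` {..<m * k}) (state A k) (estimate A G k)"
    and "gram cov m m (estimate A G k) (estimate A G k) = S k"
    using k by auto
  then show ?thesis
    using Hcov_eq_gram_orth_proj[OF signaling_rule_memoryless k] by simp
qed

end

lemma gain_for_covariance_step:
  assumes A: "A \<in> carrier_mat m m" and S': "S' \<in> carrier_mat m m"
    and upper: "loewner_ge m \<Sigma> S" and lower: "loewner_ge m S (A * S' * transpose_mat A)"
  shows "\<exists>G \<in> carrier_mat m m. (\<Sigma> - A * S' * transpose_mat A) * G = S - A * S' * transpose_mat A \<and>
    psd m ((S - A * S' * transpose_mat A) - transpose_mat G * (\<Sigma> - A * S' * transpose_mat A) * G)"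
proof (rule gain_for_loewner_interval)
  have ASA: "A * S' * transpose_mat A \<in> carrier_mat m m"
    using A S' by (intro mult_carrier_mat[OF mult_carrier_mat[OF A]]) simp_all
  then show "\<Sigma> - A * S' * transpose_mat A \<in> carrier_mat m m"
    by (rule minus_carrier_mat)
  show "psd m (S - A * S' * transpose_mat A)"
    using lower by (simp add: loewner_ge_def)
  have "(\<Sigma> - A * S' * transpose_mat A) - (S - A * S' * transpose_mat A) = \<Sigma> - S"
    using upper ASA by (intro eq_matI) (auto simp: loewner_ge_def)
  then show "psd m ((\<Sigma> - A * S' * transpose_mat A) - (S - A * S' * transpose_mat A))"
    using upper by (simp add: loewner_ge_def)
qed

lemma memoryless_rule_realizes:
  fixes S :: "nat \<Rightarrow> real mat"
  assumes A: "A \<in> carrier_mat m m" and S1: "psd m S1" and Sw: "psd m Sw"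
    and S: "\<forall>k\<in>{1..\<kappa>}. psd m (S k) \<and> loewner_ge m (Sigma_o A S1 Sw k) (S k) \<and>
      (if k = 1 then loewner_ge m (S k) (0\<^sub>m m m) else loewner_ge m (S k) (A * S (k - 1) * transpose_mat A))"
  shows "\<exists>G Th. (\<forall>k\<in>{1..\<kappa>}. G k \<in> carrier_mat m m) \<and> signaling_rule m \<kappa> (memoryless_L m G) Th \<and>
    (\<forall>k\<in>{1..\<kappa>}. Hcov m A S1 Sw (memoryless_L m G) Th k = S k)"
proof -
  define S0 where "S0 = S(0 := 0\<^sub>m m m)"
  \<comment> \<open>the constraint for \<open>k = 1\<close> is the general one with \<open>S 0 = 0\<close>\<close>
  define P D where "P k = Sigma_o A S1 Sw k - A * S0 (k - 1) * transpose_mat A"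
    and "D k = S0 k - A * S0 (k - 1) * transpose_mat A" for k
  have S0: "S0 k \<in> carrier_mat m m" if "k \<le> \<kappa>" for k
    using S that by (cases k) (auto simp: S0_def psd_def)
  have "\<exists>G \<in> carrier_mat m m. P k * G = D k \<and> psd m (D k - transpose_mat G * P k * G)"
    if k: "k \<in> {1..\<kappa>}" for k
  proof -
    have "k - 1 \<le> \<kappa>"
      using k by auto
    have "loewner_ge m (Sigma_o A S1 Sw k) (S0 k)"
      using bspec[OF S k] k by (simp add: S0_def)
    moreover have "loewner_ge m (S0 k) (A * S0 (k - 1) * transpose_mat A)"
    proof (cases "k = 1")
      case True
      have "A * S0 (k - 1) * transpose_mat A = 0\<^sub>m m m"
        using A True by (simp add: S0_def)
      then show ?thesis
        using bspec[OF S k] True by (simp add: S0_def)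
    qed (use bspec[OF S k] k in \<open>simp add: S0_def\<close>)
    ultimately show ?thesis
      unfolding P_def D_def by (rule gain_for_covariance_step[OF A S0[OF \<open>k - 1 \<le> \<kappa>\<close>]])
  qed
  then obtain G where G: "\<And>k. k \<in> {1..\<kappa>} \<Longrightarrow>
      G k \<in> carrier_mat m m \<and> P k * G k = D k \<and> psd m (D k - transpose_mat (G k) * P k * G k)"
    by metis
  define Th where "Th k = D k - transpose_mat (G k) * P k * G k" for k
  have "\<And>k. k \<in> {1..\<kappa>} \<Longrightarrow> psd m (Th k)"
    using G by (simp add: Th_def)
  then interpret gauss_markov m \<kappa> A S1 Sw Th
    by (intro gauss_markov.intro A S1 Sw)
  have "Hcov m A S1 Sw (memoryless_L m G) Th k = S0 k" if "k \<in> {1..\<kappa>}" for k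
  proof (rule Hcov_memoryless[OF _ _ _ _ _ that])
    show "S0 0 = 0\<^sub>m m m"
      by (simp add: S0_def)
    show "S0 k \<in> carrier_mat m m" if "k \<in> {1..\<kappa>}" for k
      using S0 that by simp
    show "G k \<in> carrier_mat m m" if "k \<in> {1..\<kappa>}" for k
      using G[OF that] by blast
    show "(Sigma_o A S1 Sw k - A * S0 (k - 1) * transpose_mat A) * G k = S0 k - A * S0 (k - 1) * transpose_mat A"
      if "k \<in> {1..\<kappa>}" for k
      using G[OF that] by (simp add: P_def D_def)
  qed (simp add: Th_def P_def D_def)
  then show ?thesis
    using G signaling_rule_memoryless by (intro exI[of _ G] exI[of _ Th]) (auto simp: S0_def)
qed

theorem proposition1:
  fixes m \<kappa> :: nat and A S1 Sw :: "real mat"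
  assumes A: "A \<in> carrier_mat m m" and S1: "psd m S1" and Sw: "psd m Sw"
  shows "(\<forall>L Th. signaling_rule m \<kappa> L Th \<longrightarrow>
            (\<forall>k\<in>{1..\<kappa>}.
               loewner_ge m (Sigma_o A S1 Sw k) (Hcov m A S1 Sw L Th k) \<and>
               (if k = 1 then loewner_ge m (Hcov m A S1 Sw L Th k) (0\<^sub>m m m)
                else loewner_ge m (Hcov m A S1 Sw L Th k)
                       (A * Hcov m A S1 Sw L Th (k - 1) * transpose_mat A))))
       \<and> (\<forall>S :: nat \<Rightarrow> real mat.
            (\<forall>k\<in>{1..\<kappa>}. psd m (S k) \<and> loewner_ge m (Sigma_o A S1 Sw k) (S k) \<and>
               (if k = 1 then loewner_ge m (S k) (0\<^sub>m m m)
                else loewner_ge m (S k) (A * S (k - 1) * transpose_mat A)))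
            \<longrightarrow> (\<exists>Lkk Th. (\<forall>k\<in>{1..\<kappa>}. Lkk k \<in> carrier_mat m m) \<and>
                   signaling_rule m \<kappa> (memoryless_L m Lkk) Th \<and>
                   (\<forall>k\<in>{1..\<kappa>}. Hcov m A S1 Sw (memoryless_L m Lkk) Th k = S k)))"
proof (rule conjI; intro allI impI ballI)
  fix L Th k
  assume rule: "signaling_rule m \<kappa> L Th" and k: "k \<in> {1..\<kappa>}"
  have "\<And>t. t \<in> {1..\<kappa>} \<Longrightarrow> psd m (Th t)"
    using rule by (simp add: signaling_rule_def)
  then interpret gauss_markov m \<kappa> A S1 Sw Th
    by (intro gauss_markov.intro A S1 Sw)
  have "loewner_ge m (Hcov m A S1 Sw L Th k) (A * Hcov m A S1 Sw L Th (k - 1) * transpose_mat A)"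
    if "k \<noteq> 1"
  proof -
    have "k - 1 \<in> {1..<\<kappa>}" and "Suc (k - 1) = k"
      using k that by auto
    then show ?thesis
      using loewner_ge_Hcov_Suc[OF rule] by metis
  qed
  then show "loewner_ge m (Sigma_o A S1 Sw k) (Hcov m A S1 Sw L Th k) \<and>
      (if k = 1 then loewner_ge m (Hcov m A S1 Sw L Th k) (0\<^sub>m m m)
       else loewner_ge m (Hcov m A S1 Sw L Th k) (A * Hcov m A S1 Sw L Th (k - 1) * transpose_mat A))"
    using loewner_ge_Sigma_o_Hcov[OF rule k] loewner_ge_Hcov_zero[OF rule k] by auto
qed (rule memoryless_rule_realizes[OF A S1 Sw])

end
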